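(* Let $G=\langle S_k\mid K\rangle$ be a finitely generated semigroup as described in the context with $K$ primitive, and suppose $\sum_{j=1}^kK(s_i,s_j)=k$ for some $s_i\in S_k$. Let $\mathcal{A}$ be a finite alphabet and $X=X_{\mathbf{A}}\subseteq\mathcal{A}^G$ a Markov tree shift. Then the topological entropy of $X$ exists and \[h(X)=\lim_{n\to\infty}\frac{\log p_n}{|\Delta_n|}=h^{(s)}(X).\]
   Context: Let $K$ be a $k\times k$ matrix with entries in $\{0,1\}$ indexed by $S_k=\{s_1,\dots,s_k\}$, and let $G=\langle S_k\mid K\rangle$ be the semigroup generated by $S_k$ subject to the relations $s_is_j=1_G$ if and only if $K(s_i,s_j)=0$ ($1_G$ the identity). Every $g\in G$ has a unique minimal representation $g=g_1g_2\cdots g_n$ with $g_l\in S_k$ and $K(g_l,g_{l+1})=1$; its length is $|g|=n$ (with $|1_G|=0$). For $n\ge0$, $\Delta_n=\{h\in G:|h|\le n\}$, and for $g\in G$ the $n$-semiball is $\bar{\Delta}^{(g)}_n=\{gh: h\in G,\ |h|\le n,\ |gh|=|g|+|h|\}$. For a finite alphabet $\mathcal{A}$, a pattern is a map $u:H\to\mathcal{A}$ with $H\subset G$ finite; $u$ is accepted by $t\in\mathcal{A}^G$ if there is $g\in G$ with $t_{gh}=u_h$ for all $h\in H$. For a subset $X\subseteq\mathcal{A}^G$, $p_n$ is the number of patterns $u\in\mathcal{A}^{\Delta_n}$ accepted by some $t\in X$, and $p^{(g)}_n$ the number of patterns $u\in\mathcal{A}^{\bar{\Delta}^{(g)}_n}$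 accepted by some $t\in X$. Given a $k$-tuple $\mathbf{A}=(A_1,\dots,A_k)$ of $\{0,1\}$-matrices indexed by $\mathcal{A}$, the Markov tree shift is $X_{\mathbf{A}}=\{t\in\mathcal{A}^G: A_i(t_g,t_{gs_i})=1 \text{ for all } g\in G \text{ and } i \text{ with } |gs_i|=|g|+1\}$. The $i$th stem entropy is $h^{(s_i)}(X)=\limsup_{n\to\infty}\log p^{(s_i)}_n/|\bar{\Delta}^{(s_i)}_n|$; since $K$ is primitive these values all coincide, and $h^{(s)}(X)$ denotes their common value (the stem entropy). A nonnegative square matrix is primitive if some power has all entries positive. *)

theory Defs
  imports Complex_Main "HOL-Library.Extended_Real" "HOL-Library.Liminf_Limsup"
begin

text \<open>The generators s_1..s_k are encoded as the indices 0..k-1; the matrix K is a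
function nat => nat => nat (only indices < k matter). Elements of
G = <S_k | K> are their unique minimal representations: words (lists of
generator indices) with K(g_l, g_(l+1)) = 1 for consecutive letters.
The identity is the empty word.\<close>

definition Gset :: "nat \<Rightarrow> (nat \<Rightarrow> nat \<Rightarrow> nat) \<Rightarrow> nat list set" where
  "Gset k K = {w. set w \<subseteq> {..<k} \<and> (\<forall>l. Suc l < length w \<longrightarrow> K (w ! l) (w ! Suc l) = 1)}"

text \<open>Right multiplication by one generator: s_i s_j = 1 iff K(s_i,s_j) = 0.\<close>
definition push :: "(nat \<Rightarrow> nat \<Rightarrow> nat) \<Rightarrow> nat list \<Rightarrow> nat \<Rightarrow> nat list" where
  "push K g x = (if g \<noteq> [] \<and> K (last g) x = 0 then butlast g else g @ [x])"

fun gmult :: "(nat \<Rightarrow> nat \<Rightarrow> nat) \<Rightarrow> nat list \<Rightarrow> nat list \<Rightarrow> nat list" where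
  "gmult K g [] = g"
| "gmult K g (x # h) = gmult K (push K g x) h"

definition ball :: "nat \<Rightarrow> (nat \<Rightarrow> nat \<Rightarrow> nat) \<Rightarrow> nat \<Rightarrow> nat list set" where
  "ball k K n = {h \<in> Gset k K. length h \<le> n}"

definition semiball :: "nat \<Rightarrow> (nat \<Rightarrow> nat \<Rightarrow> nat) \<Rightarrow> nat list \<Rightarrow> nat \<Rightarrow> nat list set" where
  "semiball k K g n = {gmult K g h | h. h \<in> Gset k K \<and> length h \<le> n \<and>
      length (gmult K g h) = length g + length h}"

text \<open>Patterns u : H -> alphabet accepted by some t in X (represented as
functions extensional outside H).\<close>
definition accepted_patterns ::
  "nat \<Rightarrow> (nat \<Rightarrow> nat \<Rightarrow> nat) \<Rightarrow> (nat list \<Rightarrow> 'a) set \<Rightarrow> nat list set \<Rightarrow> (nat list \<Rightarrow> 'a) set" where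
  "accepted_patterns k K X H =
     {(\<lambda>h. if h \<in> H then t (gmult K g h) else undefined) | t g. t \<in> X \<and> g \<in> Gset k K}"

definition pn :: "nat \<Rightarrow> (nat \<Rightarrow> nat \<Rightarrow> nat) \<Rightarrow> (nat list \<Rightarrow> 'a) set \<Rightarrow> nat \<Rightarrow> nat" where
  "pn k K X n = card (accepted_patterns k K X (ball k K n))"

definition pn_semi :: "nat \<Rightarrow> (nat \<Rightarrow> nat \<Rightarrow> nat) \<Rightarrow> (nat list \<Rightarrow> 'a) set \<Rightarrow> nat list \<Rightarrow> nat \<Rightarrow> nat" where
  "pn_semi k K X g n = card (accepted_patterns k K X (semiball k K g n))"

text \<open>Markov tree shift X_A; A i is the 0-1 matrix A_i (as a relation).\<close>
definition markov_tree_shift ::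
  "nat \<Rightarrow> (nat \<Rightarrow> nat \<Rightarrow> nat) \<Rightarrow> (nat \<Rightarrow> 'a \<Rightarrow> 'a \<Rightarrow> bool) \<Rightarrow> (nat list \<Rightarrow> 'a) set" where
  "markov_tree_shift k K A = {t. \<forall>g\<in>Gset k K. \<forall>i<k.
      length (gmult K g [i]) = Suc (length g) \<longrightarrow> A i (t g) (t (gmult K g [i]))}"

definition stem_entropy ::
  "nat \<Rightarrow> (nat \<Rightarrow> nat \<Rightarrow> nat) \<Rightarrow> (nat list \<Rightarrow> 'a) set \<Rightarrow> nat \<Rightarrow> ereal" where
  "stem_entropy k K X i = limsup (\<lambda>n. ereal (ln (real (pn_semi k K X [i] n)) /
       real (card (semiball k K [i] n))))"

fun kpow :: "nat \<Rightarrow> (nat \<Rightarrow> nat \<Rightarrow> nat) \<Rightarrow> nat \<Rightarrow> nat \<Rightarrow> nat \<Rightarrow> nat" where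
  "kpow k K 0 i j = (if i = j then 1 else 0)"
| "kpow k K (Suc m) i j = (\<Sum>l<k. kpow k K m i l * K l j)"

definition primitive :: "nat \<Rightarrow> (nat \<Rightarrow> nat \<Rightarrow> nat) \<Rightarrow> bool" where
  "primitive k K = (\<exists>m\<ge>1. \<forall>i<k. \<forall>j<k. kpow k K m i j > 0)"

end

theory Submission
  imports Defs "HOL-Library.FuncSet"
begin

text \<open>For a generator \<open>y\<close> let \<open>s\<^sub>y(n)\<close> be the size of the stem (semiball) of height \<open>n\<close>
  at \<open>y\<close> and \<open>h\<^sub>y(n)\<close> the logarithm of its number of patterns. Since a pattern is determined by
  its restrictions, \<open>h\<close> is subadditive along any cover of a stem by translated stems, and the
  stem at a generator \<open>F\<close> with a full row of \<open>K\<close> is a translate of the ball. Cutting stems into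
  bands of fixed height \<open>b\<close> bounds all ratios \<open>h\<^sub>y(n) / s\<^sub>y(n)\<close> asymptotically by their maximum at
  height \<open>b\<close>, so the maximal ratio converges to its infimum. Primitivity joins every generator
  to a maximising one by paths of bounded length, which forces each ratio to that same limit,
  and the ratio for the ball is squeezed between the ratio at \<open>F\<close> and the maximal ratio.\<close>

lemma tendsto_const_div_real_Suc: "(\<lambda>n. c / (real n + 1)) \<longlonglongrightarrow> 0"
  using tendsto_mult_right_zero[OF LIMSEQ_inverse_real_of_nat, of c]
  by (simp add: divide_inverse add.commute)

lemma ln_le_ln_mult_prod:
  fixes a c :: nat and b :: "'i \<Rightarrow> nat"
  assumes "0 < a" "finite I" "a \<le> c * prod b I"
  shows "ln (real a) \<le> ln (real c) + (\<Sum>i\<in>I. ln (real (b i)))"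
proof -
  have "0 < c * prod b I" using assms(1,3) by linarith
  then have pos: "0 < c" "\<And>i. i \<in> I \<Longrightarrow> 0 < b i"
    using assms(2) by (auto simp: prod_zero_iff)
  have "ln (real a) \<le> ln (real c * (\<Prod>i\<in>I. real (b i)))"
    using assms(1,3) \<open>0 < c * prod b I\<close>
    by (subst ln_le_cancel_iff) (simp_all flip: of_nat_mult of_nat_prod)
  also have "\<dots> = ln (real c) + (\<Sum>i\<in>I. ln (real (b i)))"
    using assms(2) pos by (simp add: ln_mult ln_prod prod_pos)
  finally show ?thesis .
qed

lemma zero_one_row_sum_eq:
  fixes K :: "nat \<Rightarrow> nat \<Rightarrow> nat"
  assumes "\<forall>j<k. K i j \<in> {0, 1}" "(\<Sum>j<k. K i j) = k"
  shows "\<forall>j<k. K i j = 1"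
proof -
  have sum_eq: "(\<Sum>j<k. K i j) = (\<Sum>j<k. 1::nat)" using assms(2) by simp
  have le: "K i j \<le> 1" if "j \<in> {..<k}" for j using assms(1) that by auto
  show ?thesis using sum_mono_inv[OF sum_eq le] by simp
qed

section \<open>Reduced words\<close>

lemma successively_iff_nth:
  "successively P xs \<longleftrightarrow> (\<forall>l. Suc l < length xs \<longrightarrow> P (xs ! l) (xs ! Suc l))"
proof (induction P xs rule: successively.induct)
  case (3 P x y xs)
  then show ?case by (auto simp: All_less_Suc2 less_Suc_eq_0_disj)
qed auto

lemma Gset_iff_successively:
  "w \<in> Gset k K \<longleftrightarrow> set w \<subseteq> {..<k} \<and> successively (\<lambda>x y. K x y = 1) w"
  by (simp add: Gset_def successively_iff_nth)

lemma last_less_if_in_Gset: "w \<in> Gset k K \<Longrightarrow> w \<noteq> [] \<Longrightarrow> last w < k"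
  unfolding Gset_def by (blast dest: last_in_set)

lemma Nil_in_Gset [simp]: "[] \<in> Gset k K"
  by (simp add: Gset_def)

lemma Cons_in_Gset_iff:
  "y # h \<in> Gset k K \<longleftrightarrow> y < k \<and> h \<in> Gset k K \<and> (h \<noteq> [] \<longrightarrow> K y (hd h) = 1)"
  by (auto simp: Gset_iff_successively successively_Cons)

lemma append_in_Gset_iff:
  "g @ h \<in> Gset k K \<longleftrightarrow>
     g \<in> Gset k K \<and> h \<in> Gset k K \<and> (g \<noteq> [] \<and> h \<noteq> [] \<longrightarrow> K (last g) (hd h) = 1)"
  by (auto simp: Gset_iff_successively successively_append_iff)

lemma gmult_append: "gmult K g (xs @ ys) = gmult K (gmult K g xs) ys"
  by (induction xs arbitrary: g) auto

lemma gmult_eq_append: "g @ h \<in> Gset k K \<Longrightarrow> gmult K g h = g @ h"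
proof (induction h arbitrary: g)
  case (Cons x h)
  then have "push K g x = g @ [x]"
    by (auto simp: push_def append_in_Gset_iff)
  with Cons show ?case by simp
qed simp

lemma length_gmult_le: "length (gmult K g h) \<le> length g + length h"
proof (induction h arbitrary: g)
  case (Cons x h)
  have "length (push K g x) \<le> Suc (length g)" by (simp add: push_def le_SucI)
  with Cons.IH[of "push K g x"] show ?case by simp
qed simp

lemma gmult_eq_append_if_length:
  "length (gmult K g h) = length g + length h \<Longrightarrow> gmult K g h = g @ h"
proof (induction h arbitrary: g)
  case (Cons x h)
  show ?case
  proof (cases "g \<noteq> [] \<and> K (last g) x = 0")
    case True
    then have "length (gmult K (push K g x) h) < length g + length (x # h)"
      using length_gmult_le[of K "push K g x" h] by (simp add: push_def)
    with Cons.prems show ?thesis by simp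
  next
    case False
    then have push: "push K g x = g @ [x]" unfolding push_def by (rule if_not_P)
    have "gmult K (g @ [x]) h = (g @ [x]) @ h"
      by (rule Cons.IH) (use Cons.prems push in simp)
    then show ?thesis using push by simp
  qed
qed simp

locale zero_one_matrix =
  fixes k :: nat and K :: "nat \<Rightarrow> nat \<Rightarrow> nat"
  assumes zero_one: "\<forall>i<k. \<forall>j<k. K i j \<in> {0, 1}"
begin

lemma push_in_Gset:
  assumes g: "g \<in> Gset k K" and x: "x < k"
  shows "push K g x \<in> Gset k K"
proof (cases "g \<noteq> [] \<and> K (last g) x = 0")
  case True
  then show ?thesis
    using g append_in_Gset_iff[of "butlast g" "[last g]"] by (simp add: push_def)
next
  case False
  have "K (last g) x = 1" if "g \<noteq> []"
  proof -
    have "last g < k" using g that by (rule last_less_if_in_Gset)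
    then have "K (last g) x \<in> {0, 1}" using zero_one x by blast
    then show ?thesis using False that by auto
  qed
  with g x False show ?thesis
    by (auto simp: push_def append_in_Gset_iff Cons_in_Gset_iff)
qed

lemma gmult_in_Gset: "g \<in> Gset k K \<Longrightarrow> set h \<subseteq> {..<k} \<Longrightarrow> gmult K g h \<in> Gset k K"
  by (induction h arbitrary: g) (auto simp: push_in_Gset)

lemma kpow_Suc_posE:
  assumes "kpow k K (Suc j) y x > 0" "x < k"
  obtains l where "l < k" "kpow k K j y l > 0" "K l x = 1"
proof -
  have "(\<Sum>l<k. kpow k K j y l * K l x) \<noteq> 0"
    using assms(1) by (simp only: kpow.simps(2) neq0_conv)
  then obtain l where l: "l \<in> {..<k}" "kpow k K j y l * K l x \<noteq> 0"
    by (rule sum.not_neutral_contains_not_neutral)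
  moreover have "K l x \<in> {0, 1}" using zero_one l(1) assms(2) by blast
  ultimately show ?thesis using that by auto
qed

end

section \<open>Counting patterns\<close>

lemma accepted_patterns_eq:
  "accepted_patterns k K X H = {restrict (\<lambda>h. t (gmult K g h)) H | t g. t \<in> X \<and> g \<in> Gset k K}"
  by (simp add: accepted_patterns_def restrict_def)

lemma accepted_patterns_empty [simp]: "accepted_patterns k K {} H = {}"
  by (simp add: accepted_patterns_def)

lemma accepted_patterns_subset_PiE: "accepted_patterns k K X H \<subseteq> H \<rightarrow>\<^sub>E UNIV"
  by (auto simp: accepted_patterns_def)

lemma accepted_patterns_undefined:
  "u \<in> accepted_patterns k K X H \<Longrightarrow> h \<notin> H \<Longrightarrow> u h = undefined"
  by (auto simp: accepted_patterns_def)

lemma accepted_patterns_eqI: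
  assumes "u \<in> accepted_patterns k K X H" "v \<in> accepted_patterns k K X H" "\<And>h. h \<in> H \<Longrightarrow> u h = v h"
  shows "u = v"
proof
  fix h
  show "u h = v h"
    using accepted_patterns_undefined[OF assms(1)] accepted_patterns_undefined[OF assms(2)]
    by (cases "h \<in> H") (simp_all add: assms(3))
qed

lemma finite_accepted_patterns:
  fixes X :: "(nat list \<Rightarrow> 'a::finite) set"
  shows "finite H \<Longrightarrow> finite (accepted_patterns k K X H)"
  using accepted_patterns_subset_PiE by (rule finite_subset) (simp add: finite_PiE)

lemma card_accepted_patterns_pos:
  fixes X :: "(nat list \<Rightarrow> 'a::finite) set"
  assumes "finite H" "X \<noteq> {}"
  shows "0 < card (accepted_patterns k K X H)"
proof -
  obtain t where "t \<in> X" using assms(2) by blast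
  then have "restrict (\<lambda>h. t (gmult K [] h)) H \<in> accepted_patterns k K X H"
    unfolding accepted_patterns_eq using Nil_in_Gset[of k K] by blast
  then show ?thesis using finite_accepted_patterns[OF assms(1)] card_gt_0_iff by blast
qed

lemma card_accepted_patterns_le:
  fixes X :: "(nat list \<Rightarrow> 'a::finite) set"
  assumes "finite H"
  shows "card (accepted_patterns k K X H) \<le> card (UNIV :: 'a set) ^ card H"
proof -
  have "card (accepted_patterns k K X H) \<le> card (H \<rightarrow>\<^sub>E (UNIV :: 'a set))"
    by (rule card_mono[OF _ accepted_patterns_subset_PiE]) (simp add: assms finite_PiE)
  then show ?thesis by (simp add: assms card_PiE)
qed

lemma restrict_in_accepted_patterns:
  assumes "u \<in> accepted_patterns k K X H" "H' \<subseteq> H"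
  shows "restrict u H' \<in> accepted_patterns k K X H'"
proof -
  obtain t g where tg: "t \<in> X" "g \<in> Gset k K" "u = restrict (\<lambda>h. t (gmult K g h)) H"
    using assms(1) unfolding accepted_patterns_eq by blast
  then have "restrict u H' = restrict (\<lambda>h. t (gmult K g h)) H'"
    using assms(2) by (auto simp: restrict_def fun_eq_iff)
  with tg show ?thesis unfolding accepted_patterns_eq by blast
qed

lemma card_accepted_patterns_Un_le:
  fixes X :: "(nat list \<Rightarrow> 'a::finite) set"
  assumes "finite H" "finite H'"
  shows "card (accepted_patterns k K X (H \<union> H')) \<le>
           card (accepted_patterns k K X H) * card (accepted_patterns k K X H')"
proof -
  let ?P = "accepted_patterns k K X"
  let ?split = "\<lambda>u. (restrict u H, restrict u H')"
  have "inj_on ?split (?P (H \<union> H'))"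
  proof (rule inj_onI)
    fix u v assume u: "u \<in> ?P (H \<union> H')" and v: "v \<in> ?P (H \<union> H')"
      and eq: "?split u = ?split v"
    then have R: "restrict u H = restrict v H" and R': "restrict u H' = restrict v H'" by simp_all
    show "u = v"
    proof (rule accepted_patterns_eqI[OF u v])
      fix h assume "h \<in> H \<union> H'"
      then show "u h = v h" using fun_cong[OF R, of h] fun_cong[OF R', of h] by auto
    qed
  qed
  moreover have "?split ` ?P (H \<union> H') \<subseteq> ?P H \<times> ?P H'"
  proof (rule image_subsetI)
    fix u assume "u \<in> ?P (H \<union> H')"
    then show "?split u \<in> ?P H \<times> ?P H'"
      using restrict_in_accepted_patterns[of u] by blast
  qed
  moreover have "finite (?P H \<times> ?P H')"
    using assms by (simp add: finite_accepted_patterns)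
  ultimately have "card (?P (H \<union> H')) \<le> card (?P H \<times> ?P H')"
    by (rule card_inj_on_le)
  then show ?thesis by (simp add: card_cartesian_product)
qed

lemma card_accepted_patterns_UN_le:
  fixes X :: "(nat list \<Rightarrow> 'a::finite) set"
  assumes "finite I" "\<And>i. i \<in> I \<Longrightarrow> finite (H i)"
  shows "card (accepted_patterns k K X (\<Union>i\<in>I. H i)) \<le> (\<Prod>i\<in>I. card (accepted_patterns k K X (H i)))"
  using assms
proof (induction I rule: finite_induct)
  case empty
  show ?case using card_accepted_patterns_le[of "{}" k K X] by simp
next
  case (insert i I)
  have "card (accepted_patterns k K X (\<Union>i\<in>insert i I. H i)) \<le>
          card (accepted_patterns k K X (H i)) * card (accepted_patterns k K X (\<Union>i\<in>I. H i))"
    unfolding UN_insert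
    by (rule card_accepted_patterns_Un_le) (use insert.prems insert.hyps(1) in auto)
  also have "\<dots> \<le> card (accepted_patterns k K X (H i)) * (\<Prod>i\<in>I. card (accepted_patterns k K X (H i)))"
    by (rule mult_le_mono2) (use insert.IH insert.prems in blast)
  finally show ?case by (simp add: insert.hyps)
qed

lemma finite_ball: "finite (ball k K n)"
proof (rule finite_subset)
  show "ball k K n \<subseteq> {w. set w \<subseteq> {..<k} \<and> length w \<le> n}"
    by (auto simp: ball_def Gset_def)
qed (rule finite_lists_length_le, simp)

lemma finite_semiball: "finite (semiball k K g n)"
proof (rule finite_subset)
  show "semiball k K g n \<subseteq> gmult K g ` ball k K n"
    by (auto simp: semiball_def ball_def)
qed (simp add: finite_ball)

context zero_one_matrix
begin

lemma card_accepted_patterns_translate_le: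
  fixes X :: "(nat list \<Rightarrow> 'a::finite) set"
  assumes "finite H" "set p \<subseteq> {..<k}"
  shows "card (accepted_patterns k K X ((@) p ` H)) \<le> card (accepted_patterns k K X H)"
proof -
  let ?P = "accepted_patterns k K X"
  let ?shift = "\<lambda>u. restrict (\<lambda>w. u (p @ w)) H"
  have "?shift u \<in> ?P H" if u: "u \<in> ?P ((@) p ` H)" for u
  proof -
    obtain t g where tg: "t \<in> X" "g \<in> Gset k K" "u = restrict (\<lambda>h. t (gmult K g h)) ((@) p ` H)"
      using u unfolding accepted_patterns_eq by blast
    then have "?shift u = restrict (\<lambda>w. t (gmult K (gmult K g p) w)) H"
      by (auto simp: restrict_def fun_eq_iff gmult_append)
    moreover have "gmult K g p \<in> Gset k K" using tg(2) assms(2) by (rule gmult_in_Gset)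
    ultimately show ?thesis using tg(1) unfolding accepted_patterns_eq by blast
  qed
  moreover have "inj_on ?shift (?P ((@) p ` H))"
  proof (rule inj_onI)
    fix u v assume u: "u \<in> ?P ((@) p ` H)" and v: "v \<in> ?P ((@) p ` H)" and eq: "?shift u = ?shift v"
    show "u = v"
    proof (rule accepted_patterns_eqI[OF u v])
      fix x assume "x \<in> (@) p ` H"
      then obtain w where "w \<in> H" "x = p @ w" by blast
      then show "u x = v x" using fun_cong[OF eq, of w] by simp
    qed
  qed
  ultimately show ?thesis
    by (intro card_inj_on_le) (auto simp: assms finite_accepted_patterns)
qed

section \<open>Stems\<close>

lemma semiball_singleton:
  assumes "y < k"
  shows "semiball k K [y] n = {y # h | h. y # h \<in> Gset k K \<and> length h \<le> n}"
proof (intro set_eqI iffI)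
  fix w assume "w \<in> semiball k K [y] n"
  then obtain h where h: "w = gmult K [y] h" "h \<in> Gset k K" "length h \<le> n"
    "length (gmult K [y] h) = length [y] + length h"
    by (auto simp: semiball_def)
  have "w = y # h" using gmult_eq_append_if_length[OF h(4)] h(1) by simp
  moreover have "w \<in> Gset k K"
    unfolding h(1) using assms h(2)
    by (intro gmult_in_Gset) (simp_all add: Cons_in_Gset_iff Gset_def)
  ultimately show "w \<in> {y # h | h. y # h \<in> Gset k K \<and> length h \<le> n}" using h(3) by blast
next
  fix w assume "w \<in> {y # h | h. y # h \<in> Gset k K \<and> length h \<le> n}"
  then obtain h where h: "w = y # h" "y # h \<in> Gset k K" "length h \<le> n" by blast
  then have gm: "gmult K [y] h = y # h" using gmult_eq_append[of "[y]" h] by simp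
  have "h \<in> Gset k K" using h(2) by (simp add: Cons_in_Gset_iff)
  then show "w \<in> semiball k K [y] n"
    unfolding semiball_def using h(1,3) gm by (intro CollectI exI[of _ h]) simp
qed

definition successors :: "nat \<Rightarrow> nat set" where
  "successors y = {z. z < k \<and> K y z = 1}"

lemma successors_subset: "successors y \<subseteq> {..<k}"
  by (auto simp: successors_def)

lemma finite_successors: "finite (successors y)"
  using successors_subset by (rule finite_subset) simp

lemma semiball_Suc:
  assumes "y < k"
  shows "semiball k K [y] (Suc n) = insert [y] (\<Union>z\<in>successors y. (#) y ` semiball k K [z] n)"
proof -
  have "y # h \<in> Gset k K \<and> length h \<le> Suc n \<longleftrightarrow>
          h = [] \<or> (\<exists>z\<in>successors y. \<exists>h'. h = z # h' \<and> z # h' \<in> Gset k K \<and> length h' \<le> n)" for h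
    using assms by (cases h) (auto simp: Cons_in_Gset_iff successors_def)
  then show ?thesis
    using assms by (auto simp: semiball_singleton successors_def)
qed

lemma card_semiball_Suc:
  assumes "y < k"
  shows "card (semiball k K [y] (Suc n)) = Suc (\<Sum>z\<in>successors y. card (semiball k K [z] n))"
proof -
  have "card (\<Union>z\<in>successors y. (#) y ` semiball k K [z] n) =
          (\<Sum>z\<in>successors y. card ((#) y ` semiball k K [z] n))"
  proof (rule card_UN_disjoint)
    show "\<forall>z\<in>successors y. \<forall>z'\<in>successors y. z \<noteq> z' \<longrightarrow>
            (#) y ` semiball k K [z] n \<inter> (#) y ` semiball k K [z'] n = {}"
      by (auto simp: semiball_singleton successors_def)
  qed (simp_all add: finite_successors finite_semiball)
  moreover have "[y] \<notin> (\<Union>z\<in>successors y. (#) y ` semiball k K [z] n)"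
    by (auto simp: semiball_singleton successors_def)
  ultimately show ?thesis
    by (simp add: semiball_Suc[OF assms] finite_successors finite_semiball card_image)
qed

lemma ball_Suc: "ball k K (Suc n) = insert [] (\<Union>z<k. semiball k K [z] n)"
proof -
  have "h \<in> Gset k K \<and> length h \<le> Suc n \<longleftrightarrow>
          h = [] \<or> (\<exists>z<k. \<exists>h'. h = z # h' \<and> z # h' \<in> Gset k K \<and> length h' \<le> n)" for h
    by (cases h) (auto simp: Cons_in_Gset_iff)
  then show ?thesis by (auto simp: ball_def semiball_singleton)
qed

lemma semiball_subset_ball: "y < k \<Longrightarrow> semiball k K [y] n \<subseteq> (#) y ` ball k K n"
  by (auto simp: semiball_singleton ball_def Cons_in_Gset_iff)

lemma semiball_full_row:
  assumes "F < k" "\<forall>j<k. K F j = 1"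
  shows "semiball k K [F] n = (#) F ` ball k K n"
proof
  show "(#) F ` ball k K n \<subseteq> semiball k K [F] n"
  proof
    fix w assume "w \<in> (#) F ` ball k K n"
    then obtain h where h: "w = F # h" "h \<in> Gset k K" "length h \<le> n" by (auto simp: ball_def)
    have "hd h < k" if "h \<noteq> []" using h(2) that by (cases h) (auto simp: Cons_in_Gset_iff)
    then have "F # h \<in> Gset k K" using h(2) assms by (auto simp: Cons_in_Gset_iff)
    then show "w \<in> semiball k K [F] n" using h assms(1) by (auto simp: semiball_singleton)
  qed
qed (rule semiball_subset_ball[OF assms(1)])

lemma kpow_pos_imp_path:
  assumes "kpow k K j y x > 0" "y < k" "x < k"
  shows "\<exists>h. y # h \<in> Gset k K \<and> length h = j \<and> last (y # h) = x"
  using assms(1,3)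
proof (induction j arbitrary: x)
  case 0
  then show ?case using assms(2) by (auto simp: Cons_in_Gset_iff split: if_splits)
next
  case (Suc j)
  obtain l where l: "l < k" "kpow k K j y l > 0" "K l x = 1"
    using kpow_Suc_posE[OF Suc.prems] .
  obtain h where h: "y # h \<in> Gset k K" "length h = j" "last (y # h) = l"
    using Suc.IH[OF l(2,1)] by blast
  have "[x] \<in> Gset k K" using Suc.prems(2) by (simp add: Cons_in_Gset_iff)
  then have "(y # h) @ [x] \<in> Gset k K"
    using append_in_Gset_iff[of "y # h" "[x]" k K] h(1,3) l(3) by simp
  then show ?case using h(2) by (intro exI[of _ "h @ [x]"]) simp
qed

lemma graft_semiball_subset:
  assumes "y # h \<in> Gset k K" "last (y # h) = x"
  shows "(@) (butlast (y # h)) ` semiball k K [x] n \<subseteq> semiball k K [y] (length h + n)"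
proof
  have x: "x < k" using last_less_if_in_Gset[OF assms(1)] assms(2) by simp
  fix w assume "w \<in> (@) (butlast (y # h)) ` semiball k K [x] n"
  then obtain r where r: "w = butlast (y # h) @ x # r" "x # r \<in> Gset k K" "length r \<le> n"
    by (auto simp: semiball_singleton[OF x])
  have w: "w = (y # h) @ r"
    using r(1) assms(2) by (metis append_butlast_last_id append_eq_append_conv2 list.distinct(1) append_Cons append_Nil)
  have "r \<in> Gset k K" "r \<noteq> [] \<longrightarrow> K x (hd r) = 1"
    using r(2) by (simp_all add: Cons_in_Gset_iff)
  then have "(y # h) @ r \<in> Gset k K"
    using append_in_Gset_iff[of "y # h" r k K] assms by simp
  then show "w \<in> semiball k K [y] (length h + n)"
    using w r(3) assms(1) by (auto simp: semiball_singleton Cons_in_Gset_iff)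
qed

lemma semiball_mono: "n \<le> n' \<Longrightarrow> semiball k K g n \<subseteq> semiball k K g n'"
  by (auto simp: semiball_def)

definition semisphere :: "nat \<Rightarrow> nat \<Rightarrow> nat list set" where
  "semisphere y j = {y # h | h. y # h \<in> Gset k K \<and> length h = j}"

lemma finite_semisphere: "finite (semisphere y j)"
proof (rule finite_subset)
  show "semisphere y j \<subseteq> (#) y ` ball k K j"
    by (auto simp: semisphere_def ball_def Cons_in_Gset_iff)
qed (simp add: finite_ball)

lemma semisphere_last:
  assumes "v \<in> semisphere y j"
  obtains h where "v = y # h" "y # h \<in> Gset k K" "length h = j" "last v < k"
proof -
  obtain h where h: "v = y # h" "y # h \<in> Gset k K" "length h = j"
    using assms by (auto simp: semisphere_def)
  moreover have "last v < k" using h(1,2) last_less_if_in_Gset by blast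
  ultimately show ?thesis using that by blast
qed

lemma semiball_split:
  assumes "y < k"
  shows "semiball k K [y] (D + 1 + b) =
           semiball k K [y] D \<union> (\<Union>v\<in>semisphere y (D + 1). (@) (butlast v) ` semiball k K [last v] b)"
    (is "?L = ?T \<union> ?B")
proof
  show "?T \<union> ?B \<subseteq> ?L"
  proof (intro Un_least UN_least)
    show "?T \<subseteq> ?L" by (rule semiball_mono) simp
    fix v assume "v \<in> semisphere y (D + 1)"
    then obtain h where "v = y # h" "y # h \<in> Gset k K" "length h = D + 1"
      by (auto simp: semisphere_def)
    then show "(@) (butlast v) ` semiball k K [last v] b \<subseteq> ?L"
      using graft_semiball_subset[of y h "last v" b] by simp
  qed
next
  show "?L \<subseteq> ?T \<union> ?B"
  proof
    fix w assume "w \<in> ?L"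
    then obtain h where h: "w = y # h" "y # h \<in> Gset k K" "length h \<le> D + 1 + b"
      by (auto simp: semiball_singleton[OF assms])
    show "w \<in> ?T \<union> ?B"
    proof (cases "length h \<le> D")
      case True
      then show ?thesis using h by (auto simp: semiball_singleton[OF assms])
    next
      case False
      define v where "v = y # take (D + 1) h"
      define r where "r = drop (D + 1) h"
      have w: "w = v @ r" by (simp add: h(1) v_def r_def)
      have v_ne: "v \<noteq> []" by (simp add: v_def)
      have "v @ r \<in> Gset k K" using h(1,2) w by simp
      then have "v \<in> Gset k K" "r \<in> Gset k K" "r \<noteq> [] \<longrightarrow> K (last v) (hd r) = 1"
        using v_ne by (simp_all add: append_in_Gset_iff)
      moreover have "last v < k" using \<open>v \<in> Gset k K\<close> v_ne by (rule last_less_if_in_Gset)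
      ultimately have "last v # r \<in> semiball k K [last v] b"
        using h(3) by (auto simp: semiball_singleton Cons_in_Gset_iff r_def)
      moreover have "v \<in> semisphere y (D + 1)"
        using \<open>v \<in> Gset k K\<close> False by (auto simp: semisphere_def v_def)
      moreover have "w = butlast v @ last v # r" using w v_ne by simp
      ultimately show ?thesis by blast
    qed
  qed
qed

lemma card_semiball_split:
  assumes "y < k"
  shows "card (semiball k K [y] (D + 1 + b)) =
           card (semiball k K [y] D) + (\<Sum>v\<in>semisphere y (D + 1). card (semiball k K [last v] b))"
proof -
  let ?B = "\<lambda>v. (@) (butlast v) ` semiball k K [last v] b"
  have graft_form: "\<exists>r. w = butlast v @ last v # r" if "v \<in> semisphere y (D + 1)" "w \<in> ?B v" for v w
    using that by (auto elim!: semisphere_last simp: semiball_singleton)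
  have length_butlast: "length (butlast v) = D + 1" if "v \<in> semisphere y (D + 1)" for v
    using that by (auto simp: semisphere_def)
  have "semiball k K [y] D \<inter> (\<Union>v\<in>semisphere y (D + 1). ?B v) = {}"
  proof -
    have "length w \<le> D + 1" if "w \<in> semiball k K [y] D" for w
      using that by (auto simp: semiball_singleton[OF assms])
    moreover have "length w \<ge> D + 2" if "v \<in> semisphere y (D + 1)" "w \<in> ?B v" for v w
      using graft_form[OF that] length_butlast[OF that(1)] by auto
    ultimately show ?thesis by fastforce
  qed
  moreover have "?B v \<inter> ?B v' = {}"
    if v: "v \<in> semisphere y (D + 1)" and v': "v' \<in> semisphere y (D + 1)" and "v \<noteq> v'" for v v'
  proof (rule ccontr)
    assume "?B v \<inter> ?B v' \<noteq> {}"
    then obtain w where w: "w \<in> ?B v" "w \<in> ?B v'" by blast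
    obtain r r' where "w = butlast v @ last v # r" "w = butlast v' @ last v' # r'"
      using graft_form w v v' by metis
    then have "butlast v = butlast v'" "last v = last v'"
      using length_butlast[OF v] length_butlast[OF v'] by (auto simp: append_eq_append_conv)
    moreover have "v \<noteq> []" "v' \<noteq> []" using v v' by (auto simp: semisphere_def)
    ultimately show False using that(3) by (metis append_butlast_last_id)
  qed
  ultimately have "card (semiball k K [y] D \<union> (\<Union>v\<in>semisphere y (D + 1). ?B v)) =
      card (semiball k K [y] D) + (\<Sum>v\<in>semisphere y (D + 1). card (?B v))"
    by (simp add: card_Un_disjoint card_UN_disjoint finite_semiball finite_semisphere)
  moreover have "card (?B v) = card (semiball k K [last v] b)" for v
    by (rule card_image) (simp add: inj_on_def)
  ultimately show ?thesis
    by (simp only: semiball_split[OF assms])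
qed

end

locale tree_patterns = zero_one_matrix +
  fixes X :: "(nat list \<Rightarrow> 'a::finite) set"
begin

abbreviation patterns :: "nat list set \<Rightarrow> (nat list \<Rightarrow> 'a) set" where
  "patterns H \<equiv> accepted_patterns k K X H"

lemma card_patterns_Un_translates_le:
  assumes "finite H0" "finite I" "\<And>i. i \<in> I \<Longrightarrow> finite (H i)" "\<And>i. i \<in> I \<Longrightarrow> set (p i) \<subseteq> {..<k}"
  shows "card (patterns (H0 \<union> (\<Union>i\<in>I. (@) (p i) ` H i))) \<le>
           card (patterns H0) * (\<Prod>i\<in>I. card (patterns (H i)))"
proof -
  have "card (patterns (H0 \<union> (\<Union>i\<in>I. (@) (p i) ` H i))) \<le>
          card (patterns H0) * card (patterns (\<Union>i\<in>I. (@) (p i) ` H i))"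
    using assms by (intro card_accepted_patterns_Un_le) auto
  also have "card (patterns (\<Union>i\<in>I. (@) (p i) ` H i)) \<le> (\<Prod>i\<in>I. card (patterns ((@) (p i) ` H i)))"
    using assms by (intro card_accepted_patterns_UN_le) auto
  also have "\<dots> \<le> (\<Prod>i\<in>I. card (patterns (H i)))"
    using assms by (intro prod_mono conjI card_accepted_patterns_translate_le) auto
  finally show ?thesis by (simp add: mult_le_mono2)
qed

lemma card_patterns_semiball_Suc_le:
  assumes "y < k"
  shows "card (patterns (semiball k K [y] (Suc n))) \<le>
           card (UNIV :: 'a set) * (\<Prod>z\<in>successors y. card (patterns (semiball k K [z] n)))"
proof -
  have cons: "(@) [y] = (#) y" by (rule ext) simp
  have eq: "semiball k K [y] (Suc n) = {[y]} \<union> (\<Union>z\<in>successors y. (@) [y] ` semiball k K [z] n)"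
    unfolding semiball_Suc[OF assms] cons by simp
  have "card (patterns (semiball k K [y] (Suc n))) \<le>
      card (patterns {[y]}) * (\<Prod>z\<in>successors y. card (patterns (semiball k K [z] n)))"
    unfolding eq
    by (rule card_patterns_Un_translates_le) (use assms in \<open>simp_all add: finite_successors finite_semiball\<close>)
  also have "\<dots> \<le> card (UNIV :: 'a set) * (\<Prod>z\<in>successors y. card (patterns (semiball k K [z] n)))"
    using card_accepted_patterns_le[of "{[y]}" k K X] by (intro mult_le_mono1) simp
  finally show ?thesis .
qed

lemma card_patterns_semiball_split_le:
  assumes "y < k"
  shows "card (patterns (semiball k K [y] (D + 1 + b))) \<le>
           card (patterns (semiball k K [y] D)) *
           (\<Prod>v\<in>semisphere y (D + 1). card (patterns (semiball k K [last v] b)))"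
  unfolding semiball_split[OF assms]
proof (rule card_patterns_Un_translates_le)
  fix v assume "v \<in> semisphere y (D + 1)"
  then have "set v \<subseteq> {..<k}" by (auto simp: semisphere_def Gset_def)
  then show "set (butlast v) \<subseteq> {..<k}" by (meson in_set_butlastD subset_iff)
qed (simp_all add: finite_semiball finite_semisphere)

lemma card_patterns_ball_Suc_le:
  "card (patterns (ball k K (Suc n))) \<le>
     card (UNIV :: 'a set) * (\<Prod>z<k. card (patterns (semiball k K [z] n)))"
proof -
  have eq: "ball k K (Suc n) = {[]} \<union> (\<Union>z<k. semiball k K [z] n)"
    by (simp add: ball_Suc)
  have "card (patterns (ball k K (Suc n))) \<le>
      card (patterns {[]}) * card (patterns (\<Union>z<k. semiball k K [z] n))"
    unfolding eq by (rule card_accepted_patterns_Un_le) (simp_all add: finite_semiball)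
  also have "\<dots> \<le> card (UNIV :: 'a set) * (\<Prod>z<k. card (patterns (semiball k K [z] n)))"
    using card_accepted_patterns_le[of "{[]}" k K X]
    by (intro mult_le_mono card_accepted_patterns_UN_le) (simp_all add: finite_semiball)
  finally show ?thesis .
qed

lemma card_patterns_semiball_full_row_le:
  assumes "F < k" "\<forall>j<k. K F j = 1"
  shows "card (patterns (semiball k K [F] n)) \<le> card (patterns (ball k K n))"
proof -
  have "(@) [F] = (#) F" by (rule ext) simp
  then show ?thesis
    using card_accepted_patterns_translate_le[of "ball k K n" "[F]" X] assms
    by (simp add: semiball_full_row finite_ball)
qed

end

section \<open>Pattern entropy of stems\<close>

locale primitive_tree_patterns = tree_patterns +
  fixes F m :: nat
  assumes X_nonempty: "X \<noteq> {}"
    and F_less: "F < k" and full_row: "\<forall>j<k. K F j = 1"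
    and kpow_m_pos: "\<forall>i<k. \<forall>j<k. 0 < kpow k K m i j"
begin

definition stem_size :: "nat \<Rightarrow> nat \<Rightarrow> real" where
  "stem_size y n = real (card (semiball k K [y] n))"

lemma stem_size_Suc: "y < k \<Longrightarrow> stem_size y (Suc n) = 1 + (\<Sum>z\<in>successors y. stem_size z n)"
  by (simp add: stem_size_def card_semiball_Suc)

lemma stem_size_split:
  assumes "y < k"
  shows "stem_size y (D + 1 + b) = stem_size y D + (\<Sum>v\<in>semisphere y (D + 1). stem_size (last v) b)"
  unfolding stem_size_def card_semiball_split[OF assms] by simp

lemma stem_size_full_row: "stem_size F n = real (card (ball k K n))"
  by (simp add: stem_size_def semiball_full_row[OF F_less full_row] card_image)

lemma stem_size_le_full_row:
  assumes "y < k"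
  shows "stem_size y n \<le> stem_size F n"
proof -
  have "card (semiball k K [y] n) \<le> card ((#) y ` ball k K n)"
    by (rule card_mono) (simp_all add: finite_ball semiball_subset_ball assms)
  then show ?thesis
    unfolding stem_size_full_row by (simp add: stem_size_def card_image)
qed

lemma successors_full_row: "successors F = {..<k}"
  using full_row by (auto simp: successors_def)

lemma successors_nonempty:
  assumes "y < k"
  obtains z where "z \<in> successors y"
proof -
  obtain h where h: "y # h \<in> Gset k K" "last (y # h) = F"
    using kpow_pos_imp_path[OF kpow_m_pos[rule_format, OF assms F_less] assms F_less] by blast
  show ?thesis
  proof (cases h)
    case Nil
    then show ?thesis using h(2) by (intro that[of F]) (simp add: successors_full_row F_less)
  next
    case (Cons z h')
    then show ?thesis using h(1) by (intro that[of z]) (simp add: successors_def Cons_in_Gset_iff)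
  qed
qed

lemma stem_size_ge: "y < k \<Longrightarrow> real n + 1 \<le> stem_size y n"
proof (induction n arbitrary: y)
  case 0
  have "semiball k K [y] 0 = {[y]}"
    using 0 by (auto simp: semiball_singleton Cons_in_Gset_iff)
  then show ?case by (simp add: stem_size_def)
next
  case (Suc n)
  obtain z where z: "z \<in> successors y" using successors_nonempty[OF Suc.prems] .
  then have "stem_size z n \<le> (\<Sum>z\<in>successors y. stem_size z n)"
    by (intro member_le_sum) (simp_all add: stem_size_def finite_successors)
  moreover have "real n + 1 \<le> stem_size z n"
    using z successors_subset by (intro Suc.IH) auto
  ultimately show ?case using stem_size_Suc[OF Suc.prems] by simp
qed

lemma stem_size_pos: "y < k \<Longrightarrow> 0 < stem_size y n"
  using stem_size_ge[of y n] by linarith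

lemma stem_size_full_row_Suc:
  "stem_size F n + 1 \<le> stem_size F (Suc n)" "stem_size F (Suc n) \<le> (real k + 1) * stem_size F n"
proof -
  have "stem_size F n \<le> (\<Sum>z<k. stem_size z n)"
    using F_less by (intro member_le_sum) (simp_all add: stem_size_def)
  then show "stem_size F n + 1 \<le> stem_size F (Suc n)"
    by (simp add: stem_size_Suc[OF F_less] successors_full_row)
  have "(\<Sum>z<k. stem_size z n) \<le> (\<Sum>z<k. stem_size F n)"
    by (intro sum_mono stem_size_le_full_row) simp
  moreover have "1 \<le> stem_size F n" using stem_size_ge[OF F_less, of n] by simp
  ultimately show "stem_size F (Suc n) \<le> (real k + 1) * stem_size F n"
    by (simp add: stem_size_Suc[OF F_less] successors_full_row algebra_simps)
qed

lemma stem_size_full_row_mono: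
  assumes "n \<le> n'"
  shows "stem_size F n \<le> stem_size F n'"
  using assms
proof (induction n' rule: dec_induct)
  case (step n')
  then show ?case using stem_size_full_row_Suc(1)[of n'] by linarith
qed simp

lemma stem_size_full_row_add: "stem_size F (n + j) \<le> (real k + 1) ^ j * stem_size F n"
proof (induction j)
  case (Suc j)
  have "stem_size F (n + Suc j) \<le> (real k + 1) * stem_size F (n + j)"
    using stem_size_full_row_Suc(2)[of "n + j"] by simp
  also have "\<dots> \<le> (real k + 1) * ((real k + 1) ^ j * stem_size F n)"
    using Suc.IH by (intro mult_left_mono) simp_all
  finally show ?case by (simp add: algebra_simps)
qed simp

text \<open>The stem of \<^term>\<open>x\<close> contains a copy of the stem of \<^term>\<open>F\<close> of height \<^term>\<open>n - m\<close>,
  grafted at the end of a path of length \<^term>\<open>m\<close> from \<^term>\<open>x\<close> to \<^term>\<open>F\<close>.\<close>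
lemma stem_size_full_row_le:
  assumes "x < k" "m \<le> n"
  shows "stem_size F (n + m) \<le> (real k + 1) ^ (2 * m) * stem_size x n"
proof -
  obtain h where h: "x # h \<in> Gset k K" "length h = m" "last (x # h) = F"
    using kpow_pos_imp_path[OF kpow_m_pos[rule_format, OF assms(1) F_less] assms(1) F_less] by blast
  have "card (semiball k K [F] (n - m)) = card ((@) (butlast (x # h)) ` semiball k K [F] (n - m))"
    by (rule card_image[symmetric]) (simp add: inj_on_def)
  also have "\<dots> \<le> card (semiball k K [x] n)"
    using graft_semiball_subset[OF h(1,3), of "n - m"] h(2) assms(2)
    by (intro card_mono) (simp_all add: finite_semiball)
  finally have shift: "stem_size F (n - m) \<le> stem_size x n" by (simp add: stem_size_def)
  have "stem_size F (n + m) \<le> (real k + 1) ^ (2 * m) * stem_size F (n - m)"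
    using stem_size_full_row_add[of "n - m" "2 * m"] assms(2) by (simp add: algebra_simps)
  also have "\<dots> \<le> (real k + 1) ^ (2 * m) * stem_size x n"
    using shift by (rule mult_left_mono) simp
  finally show ?thesis .
qed

definition log_patterns :: "nat \<Rightarrow> nat \<Rightarrow> real" where
  "log_patterns y n = ln (real (card (patterns (semiball k K [y] n))))"

definition log_alphabet :: real where
  "log_alphabet = ln (real (card (UNIV :: 'a set)))"

lemma card_patterns_pos: "finite H \<Longrightarrow> 0 < card (patterns H)"
  using card_accepted_patterns_pos X_nonempty by blast

lemma log_patterns_nonneg: "0 \<le> log_patterns y n"
  using card_patterns_pos[OF finite_semiball[of k K "[y]" n]] by (simp add: log_patterns_def Suc_le_eq)

lemma log_alphabet_nonneg: "0 \<le> log_alphabet"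
  by (simp add: log_alphabet_def Suc_le_eq card_gt_0_iff)

lemma log_patterns_Suc_le:
  "y < k \<Longrightarrow> log_patterns y (Suc n) \<le> log_alphabet + (\<Sum>z\<in>successors y. log_patterns z n)"
  unfolding log_patterns_def log_alphabet_def
  by (intro ln_le_ln_mult_prod card_patterns_pos card_patterns_semiball_Suc_le finite_successors finite_semiball)

lemma log_patterns_split_le:
  "y < k \<Longrightarrow> log_patterns y (D + 1 + b) \<le> log_patterns y D + (\<Sum>v\<in>semisphere y (D + 1). log_patterns (last v) b)"
  unfolding log_patterns_def
  by (intro ln_le_ln_mult_prod card_patterns_pos card_patterns_semiball_split_le finite_semisphere finite_semiball)

lemma log_patterns_ball_Suc_le:
  "ln (real (card (patterns (ball k K (Suc n))))) \<le> log_alphabet + (\<Sum>z<k. log_patterns z n)"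
  unfolding log_patterns_def log_alphabet_def
  by (intro ln_le_ln_mult_prod card_patterns_pos card_patterns_ball_Suc_le finite_ball) simp

lemma log_patterns_full_row_le: "log_patterns F n \<le> ln (real (card (patterns (ball k K n))))"
proof -
  have "0 < card (patterns (semiball k K [F] n))" by (rule card_patterns_pos[OF finite_semiball])
  then show ?thesis
    unfolding log_patterns_def using card_patterns_semiball_full_row_le[OF F_less full_row, of n]
    by (subst ln_le_cancel_iff) simp_all
qed

definition stem_ratio :: "nat \<Rightarrow> nat \<Rightarrow> real" where
  "stem_ratio y n = log_patterns y n / stem_size y n"

definition max_ratio :: "nat \<Rightarrow> real" where
  "max_ratio n = Max ((\<lambda>y. stem_ratio y n) ` {..<k})"

definition tree_entropy :: real where
  "tree_entropy = Inf (range max_ratio)"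

lemma stem_ratio_le_max_ratio: "y < k \<Longrightarrow> stem_ratio y n \<le> max_ratio n"
  unfolding max_ratio_def by (rule Max_ge) auto

lemma max_ratio_attained:
  obtains y where "y < k" "stem_ratio y n = max_ratio n"
proof -
  have "max_ratio n \<in> (\<lambda>y. stem_ratio y n) ` {..<k}"
    unfolding max_ratio_def using F_less by (intro Max_in) auto
  then show ?thesis using that by auto
qed

lemma stem_ratio_nonneg: "0 \<le> stem_ratio y n"
  by (simp add: stem_ratio_def stem_size_def log_patterns_nonneg)

lemma max_ratio_nonneg: "0 \<le> max_ratio n"
  using stem_ratio_nonneg[of F n] stem_ratio_le_max_ratio[OF F_less, of n] by linarith

lemma log_patterns_le_max_ratio: "y < k \<Longrightarrow> log_patterns y n \<le> max_ratio n * stem_size y n"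
  using stem_ratio_le_max_ratio[of y n] stem_size_pos[of y n]
  by (simp add: stem_ratio_def divide_le_eq)

lemma tree_entropy_le_max_ratio: "tree_entropy \<le> max_ratio n"
  unfolding tree_entropy_def by (rule cInf_lower) (auto intro: bdd_belowI max_ratio_nonneg)

lemma tree_entropy_nonneg: "0 \<le> tree_entropy"
  unfolding tree_entropy_def by (rule cInf_greatest) (auto simp: max_ratio_nonneg)

text \<open>Cut the stem into bands of height \<^term>\<open>b + 1\<close>: each band is covered by stems of
  height \<^term>\<open>b\<close>, whose pattern entropy is at most \<^term>\<open>max_ratio b\<close> per vertex.\<close>
lemma log_patterns_bands_le:
  assumes "y < k"
  shows "log_patterns y (a + q * (b + 1)) \<le>
           log_patterns y a + max_ratio b * (stem_size y (a + q * (b + 1)) - stem_size y a)"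
proof (induction q)
  case (Suc q)
  define D where "D = a + q * (b + 1)"
  have D: "a + Suc q * (b + 1) = D + 1 + b" by (simp add: D_def)
  have "(\<Sum>v\<in>semisphere y (D + 1). log_patterns (last v) b) \<le>
          (\<Sum>v\<in>semisphere y (D + 1). max_ratio b * stem_size (last v) b)"
    by (intro sum_mono log_patterns_le_max_ratio) (auto elim: semisphere_last)
  also have "\<dots> = max_ratio b * (stem_size y (D + 1 + b) - stem_size y D)"
    by (simp only: stem_size_split[OF assms]) (simp add: sum_distrib_left)
  finally have "log_patterns y (D + 1 + b) \<le>
                  log_patterns y D + max_ratio b * (stem_size y (D + 1 + b) - stem_size y D)"
    using log_patterns_split_le[OF assms, of D b] by linarith
  then show ?case using Suc.IH unfolding D D_def[symmetric] by (simp add: algebra_simps)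
qed simp

lemma log_patterns_affine_bound:
  obtains C where "0 \<le> C" "\<And>y n. y < k \<Longrightarrow> log_patterns y n \<le> C + max_ratio b * stem_size y n"
proof
  define C where "C = (\<Sum>a\<le>b. \<Sum>y<k. log_patterns y a)"
  show "0 \<le> C" unfolding C_def by (intro sum_nonneg log_patterns_nonneg)
  fix y n assume y: "y < k"
  define a where "a = n mod (b + 1)"
  have n: "n = a + (n div (b + 1)) * (b + 1)" unfolding a_def by (rule mod_div_mult_eq[symmetric])
  have "a \<le> b" unfolding a_def using mod_less_divisor[of "b + 1" n] by linarith
  have "log_patterns y a \<le> (\<Sum>y<k. log_patterns y a)"
    using y by (intro member_le_sum log_patterns_nonneg) auto
  also have "\<dots> \<le> C"
    unfolding C_def using \<open>a \<le> b\<close>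
    by (intro member_le_sum[of a "{..b}" "\<lambda>a. \<Sum>y<k. log_patterns y a"] sum_nonneg log_patterns_nonneg) auto
  finally have "log_patterns y a \<le> C" .
  moreover have "0 \<le> max_ratio b * stem_size y a"
    by (simp add: max_ratio_nonneg stem_size_def)
  ultimately show "log_patterns y n \<le> C + max_ratio b * stem_size y n"
    using log_patterns_bands_le[OF y, of a "n div (b + 1)" b] n by (simp add: algebra_simps)
qed

lemma stem_ratio_le_max_ratio_plus:
  assumes "y < k" "0 \<le> C" "log_patterns y n \<le> C + r * stem_size y n"
  shows "stem_ratio y n \<le> r + C / (real n + 1)"
proof -
  have pos: "0 < stem_size y n" by (rule stem_size_pos[OF assms(1)])
  then have "stem_ratio y n \<le> r + C / stem_size y n"
    using assms(3) by (simp add: stem_ratio_def field_simps)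
  also have "C / stem_size y n \<le> C / (real n + 1)"
    using assms(2) stem_size_ge[OF assms(1), of n] by (intro divide_left_mono) simp_all
  finally show ?thesis by simp
qed

lemma max_ratio_tendsto: "max_ratio \<longlonglongrightarrow> tree_entropy"
proof (rule order_tendstoI)
  fix a assume "a < tree_entropy"
  then show "\<forall>\<^sub>F n in sequentially. a < max_ratio n"
    using tree_entropy_le_max_ratio by (auto intro: always_eventually order.strict_trans2)
next
  fix a assume "tree_entropy < a"
  then obtain b where b: "max_ratio b < a"
    using cInf_lessD[of "range max_ratio" a] unfolding tree_entropy_def by auto
  obtain C where C: "0 \<le> C" "\<And>y n. y < k \<Longrightarrow> log_patterns y n \<le> C + max_ratio b * stem_size y n"
    using log_patterns_affine_bound[where b = b] by blast
  have "\<forall>\<^sub>F n in sequentially. C / (real n + 1) < a - max_ratio b"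
    using b by (intro order_tendstoD(2)[OF tendsto_const_div_real_Suc]) simp
  then show "\<forall>\<^sub>F n in sequentially. max_ratio n < a"
  proof (rule eventually_mono)
    fix n assume n: "C / (real n + 1) < a - max_ratio b"
    obtain y where y: "y < k" "stem_ratio y n = max_ratio n" by (rule max_ratio_attained)
    have "stem_ratio y n \<le> max_ratio b + C / (real n + 1)"
      using stem_ratio_le_max_ratio_plus[OF y(1) C(1) C(2)[OF y(1)]] .
    then show "max_ratio n < a" using y(2) n by linarith
  qed
qed

definition deficit :: "nat \<Rightarrow> nat \<Rightarrow> real" where
  "deficit y n = tree_entropy * stem_size y n - log_patterns y n"

lemma deficit_successor_le:
  assumes y: "y < k" and z: "z \<in> successors y"
    and max_ratio: "max_ratio n \<le> tree_entropy + \<epsilon>" and "0 \<le> \<epsilon>"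
  shows "deficit z n \<le> deficit y (Suc n) + log_alphabet + \<epsilon> * stem_size y (Suc n)"
proof -
  let ?S = "successors y - {z}"
  have sizes: "stem_size y (Suc n) = 1 + stem_size z n + (\<Sum>z'\<in>?S. stem_size z' n)"
    using stem_size_Suc[OF y] sum.remove[OF finite_successors z] by simp
  have "log_patterns y (Suc n) \<le> log_alphabet + log_patterns z n + (\<Sum>z'\<in>?S. log_patterns z' n)"
    using log_patterns_Suc_le[OF y, of n] sum.remove[OF finite_successors z, of "\<lambda>z. log_patterns z n"]
    by simp
  moreover have "(\<Sum>z'\<in>?S. log_patterns z' n) \<le> (tree_entropy + \<epsilon>) * (\<Sum>z'\<in>?S. stem_size z' n)"
  proof -
    have "(\<Sum>z'\<in>?S. log_patterns z' n) \<le> (\<Sum>z'\<in>?S. max_ratio n * stem_size z' n)"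
      using successors_subset by (intro sum_mono log_patterns_le_max_ratio) auto
    also have "\<dots> \<le> (\<Sum>z'\<in>?S. (tree_entropy + \<epsilon>) * stem_size z' n)"
      using max_ratio by (intro sum_mono mult_right_mono) (simp_all add: stem_size_def)
    finally show ?thesis by (simp add: sum_distrib_left)
  qed
  moreover have "\<epsilon> * (\<Sum>z'\<in>?S. stem_size z' n) \<le> \<epsilon> * stem_size y (Suc n)"
    using sizes \<open>0 \<le> \<epsilon>\<close> by (intro mult_left_mono) (simp_all add: stem_size_def)
  moreover have "tree_entropy * stem_size y (Suc n) \<ge>
      tree_entropy * stem_size z n + tree_entropy * (\<Sum>z'\<in>?S. stem_size z' n)"
    using sizes tree_entropy_nonneg by (simp add: algebra_simps)
  ultimately show ?thesis
    unfolding deficit_def by (simp add: algebra_simps)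
qed

lemma deficit_path_le:
  assumes "0 \<le> \<epsilon>" "\<forall>n'\<ge>n. max_ratio n' \<le> tree_entropy + \<epsilon>"
    and "x < k" "y < k" "0 < kpow k K j y x"
  shows "deficit x n \<le> deficit y (n + j) + real j * (log_alphabet + \<epsilon> * stem_size F (n + j))"
  using assms(2-5)
proof (induction j arbitrary: x n)
  case 0
  then show ?case by (simp split: if_splits)
next
  case (Suc j)
  obtain l where l: "l < k" "0 < kpow k K j y l" "K l x = 1"
    using kpow_Suc_posE[OF Suc.prems(4,2)] .
  have "x \<in> successors l" using l(3) Suc.prems(2) by (simp add: successors_def)
  then have "deficit x n \<le> deficit l (Suc n) + log_alphabet + \<epsilon> * stem_size l (Suc n)"
    using Suc.prems(1) assms(1) by (intro deficit_successor_le[OF l(1)]) auto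
  also have "deficit l (Suc n) \<le> deficit y (n + Suc j) + real j * (log_alphabet + \<epsilon> * stem_size F (n + Suc j))"
    using Suc.IH[of "Suc n" l] Suc.prems(1,3) l(1,2) by simp
  also have "\<epsilon> * stem_size l (Suc n) \<le> \<epsilon> * stem_size F (n + Suc j)"
    using assms(1) stem_size_le_full_row[OF l(1)] stem_size_full_row_mono[of "Suc n" "n + Suc j"]
    by (intro mult_left_mono) (auto intro: order_trans)
  finally show ?case by (simp add: algebra_simps)
qed

lemma deficit_le_at_max_ratio:
  assumes "y < k" "stem_ratio y n = max_ratio n"
  shows "deficit y n \<le> 0"
proof -
  have "tree_entropy \<le> log_patterns y n / stem_size y n"
    using tree_entropy_le_max_ratio[of n] assms(2) by (simp add: stem_ratio_def)
  then show ?thesis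
    using stem_size_pos[OF assms(1), of n] by (simp add: deficit_def le_divide_eq)
qed

text \<open>Compare \<^term>\<open>x\<close> with a generator \<^term>\<open>y\<close> of maximal ratio at height \<^term>\<open>n + m\<close>, along
  a path of length \<^term>\<open>m\<close> from \<^term>\<open>y\<close> to \<^term>\<open>x\<close>: the deficit of \<^term>\<open>y\<close> is not positive.\<close>
lemma deficit_eventually_le:
  assumes "0 < \<delta>" "x < k"
  shows "\<forall>\<^sub>F n in sequentially.
           deficit x n \<le> real m * log_alphabet + real m * \<delta> * (real k + 1) ^ (2 * m) * stem_size x n"
proof -
  have "\<forall>\<^sub>F n in sequentially. max_ratio n < tree_entropy + \<delta>"
    using assms(1) by (intro order_tendstoD(2)[OF max_ratio_tendsto]) simp
  then obtain N where N: "\<forall>n\<ge>N. max_ratio n < tree_entropy + \<delta>"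
    by (auto simp: eventually_sequentially)
  have "deficit x n \<le> real m * log_alphabet + real m * \<delta> * (real k + 1) ^ (2 * m) * stem_size x n"
    if n: "N \<le> n" "m \<le> n" for n
  proof -
    obtain y where y: "y < k" "stem_ratio y (n + m) = max_ratio (n + m)" by (rule max_ratio_attained)
    have "deficit x n \<le> deficit y (n + m) + real m * (log_alphabet + \<delta> * stem_size F (n + m))"
      using N n assms y(1) kpow_m_pos by (intro deficit_path_le) (auto intro: less_imp_le)
    moreover have "deficit y (n + m) \<le> 0" by (rule deficit_le_at_max_ratio[OF y])
    moreover have "real m * (\<delta> * stem_size F (n + m)) \<le>
                     real m * (\<delta> * ((real k + 1) ^ (2 * m) * stem_size x n))"
      using stem_size_full_row_le[OF assms(2) n(2)] assms(1) by (simp add: mult_left_mono)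
    ultimately show ?thesis by (simp add: algebra_simps)
  qed
  then show ?thesis by (auto simp: eventually_sequentially intro: exI[of _ "max N m"])
qed

lemma stem_ratio_eventually_ge:
  assumes "0 < \<epsilon>" "x < k"
  shows "\<forall>\<^sub>F n in sequentially. tree_entropy - \<epsilon> \<le> stem_ratio x n"
proof -
  define M where "M = (real m + 1) * (real k + 1) ^ (2 * m)"
  define \<delta> where "\<delta> = \<epsilon> / (2 * M)"
  have "0 < M" by (simp add: M_def)
  then have "0 < \<delta>" using assms(1) by (simp add: \<delta>_def)
  have "real m * (real k + 1) ^ (2 * m) \<le> M" by (simp add: M_def)
  then have "\<delta> * (real m * (real k + 1) ^ (2 * m)) \<le> \<delta> * M"
    using \<open>0 < \<delta>\<close> by (intro mult_left_mono) simp_all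
  also have "\<delta> * M = \<epsilon> / 2" using \<open>0 < M\<close> by (simp add: \<delta>_def)
  finally have \<delta>_bound: "real m * \<delta> * (real k + 1) ^ (2 * m) \<le> \<epsilon> / 2" by (simp add: mult_ac)
  have "\<forall>\<^sub>F n in sequentially. real m * log_alphabet / (real n + 1) < \<epsilon> / 2"
    using assms(1) by (intro order_tendstoD(2)[OF tendsto_const_div_real_Suc]) simp
  with deficit_eventually_le[OF \<open>0 < \<delta>\<close> assms(2)] show ?thesis
  proof eventually_elim
    case (elim n)
    have s: "real n + 1 \<le> stem_size x n" by (rule stem_size_ge[OF assms(2)])
    have "real m * log_alphabet < \<epsilon> / 2 * (real n + 1)"
      using elim(2) by (simp add: divide_less_eq mult.commute)
    also have "\<dots> \<le> \<epsilon> / 2 * stem_size x n" using assms(1) s by simp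
    finally have "real m * log_alphabet \<le> \<epsilon> / 2 * stem_size x n" by simp
    moreover have "real m * \<delta> * (real k + 1) ^ (2 * m) * stem_size x n \<le> \<epsilon> / 2 * stem_size x n"
      using \<delta>_bound s by (intro mult_right_mono) simp_all
    ultimately have "(tree_entropy - \<epsilon>) * stem_size x n \<le> log_patterns x n"
      using elim(1) unfolding deficit_def by (simp add: algebra_simps)
    then show ?case
      using stem_size_pos[OF assms(2), of n] by (simp add: stem_ratio_def le_divide_eq)
  qed
qed

lemma stem_ratio_tendsto: "y < k \<Longrightarrow> stem_ratio y \<longlonglongrightarrow> tree_entropy"
proof (rule order_tendstoI)
  fix a assume "y < k" "a < tree_entropy"
  have a: "a < tree_entropy - (tree_entropy - a) / 2"
    using \<open>a < tree_entropy\<close> by (simp add: field_simps)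
  have "\<forall>\<^sub>F n in sequentially. tree_entropy - (tree_entropy - a) / 2 \<le> stem_ratio y n"
    using \<open>y < k\<close> \<open>a < tree_entropy\<close> by (intro stem_ratio_eventually_ge) simp_all
  then show "\<forall>\<^sub>F n in sequentially. a < stem_ratio y n"
    by (rule eventually_mono) (rule order.strict_trans2[OF a])
next
  fix a assume "y < k" "tree_entropy < a"
  then have "\<forall>\<^sub>F n in sequentially. max_ratio n < a"
    by (intro order_tendstoD(2)[OF max_ratio_tendsto])
  then show "\<forall>\<^sub>F n in sequentially. stem_ratio y n < a"
    by (rule eventually_mono) (use stem_ratio_le_max_ratio[OF \<open>y < k\<close>] in \<open>rule order.strict_trans1\<close>)
qed

definition ball_ratio :: "nat \<Rightarrow> real" where
  "ball_ratio n = ln (real (card (patterns (ball k K n)))) / real (card (ball k K n))"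

lemma stem_ratio_full_row_le_ball_ratio: "stem_ratio F n \<le> ball_ratio n"
  unfolding stem_ratio_def ball_ratio_def stem_size_full_row[symmetric]
  using log_patterns_full_row_le stem_size_pos[OF F_less]
  by (intro divide_right_mono) (simp_all add: less_imp_le)

lemma ball_ratio_Suc_le: "ball_ratio (Suc n) \<le> max_ratio n + log_alphabet / (real n + 1)"
proof -
  let ?s = "stem_size F (Suc n)"
  have pos: "0 < ?s" by (rule stem_size_pos[OF F_less])
  have "(\<Sum>z<k. log_patterns z n) \<le> (\<Sum>z<k. max_ratio n * stem_size z n)"
    by (intro sum_mono log_patterns_le_max_ratio) simp
  also have "\<dots> = max_ratio n * (?s - 1)"
    by (simp add: stem_size_Suc[OF F_less] successors_full_row sum_distrib_left)
  also have "\<dots> \<le> max_ratio n * ?s"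
    using max_ratio_nonneg[of n] by (simp add: right_diff_distrib)
  finally have "ln (real (card (patterns (ball k K (Suc n))))) \<le> log_alphabet + max_ratio n * ?s"
    using log_patterns_ball_Suc_le[of n] by linarith
  then have "ball_ratio (Suc n) \<le> (log_alphabet + max_ratio n * ?s) / ?s"
    unfolding ball_ratio_def stem_size_full_row[symmetric] using pos by (rule divide_right_mono[OF _ less_imp_le])
  also have "\<dots> = max_ratio n + log_alphabet / ?s"
    using pos by (simp add: add_divide_distrib)
  also have "log_alphabet / ?s \<le> log_alphabet / (real n + 1)"
    using log_alphabet_nonneg stem_size_ge[OF F_less, of "Suc n"] by (intro divide_left_mono) simp_all
  finally show ?thesis by simp
qed

lemma ball_ratio_tendsto: "ball_ratio \<longlonglongrightarrow> tree_entropy"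
proof -
  have lower: "(\<lambda>n. stem_ratio F (Suc n)) \<longlonglongrightarrow> tree_entropy"
    using stem_ratio_tendsto[OF F_less] by (rule LIMSEQ_Suc)
  have upper: "(\<lambda>n. max_ratio n + log_alphabet / (real n + 1)) \<longlonglongrightarrow> tree_entropy"
    using tendsto_add[OF max_ratio_tendsto tendsto_const_div_real_Suc] by simp
  have "(\<lambda>n. ball_ratio (Suc n)) \<longlonglongrightarrow> tree_entropy"
    using stem_ratio_full_row_le_ball_ratio ball_ratio_Suc_le
    by (intro tendsto_sandwich[OF _ _ lower upper] always_eventually) blast+
  then show ?thesis by (rule LIMSEQ_imp_Suc)
qed

end

section \<open>The entropy of a tree shift\<close>

theorem ball_ratio_tendsto_stem_entropy:
  fixes X :: "(nat list \<Rightarrow> 'a::finite) set"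
  assumes "\<forall>i<k. \<forall>j<k. K i j \<in> {0, 1}" "primitive k K"
    and "F < k" "\<forall>j<k. K F j = 1" "i < k"
  shows "(\<lambda>n. ereal (ln (real (pn k K X n)) / real (card (ball k K n)))) \<longlonglongrightarrow> stem_entropy k K X i"
proof (cases "X = {}")
  case True
  \<comment> \<open>all pattern counts vanish, and \<^term>\<open>ln 0 = (0::real)\<close> makes both sides \<open>0\<close>\<close>
  then show ?thesis by (simp add: pn_def stem_entropy_def pn_semi_def Limsup_const)
next
  case False
  obtain m where "\<forall>i<k. \<forall>j<k. 0 < kpow k K m i j"
    using assms(2) by (auto simp: primitive_def)
  then interpret primitive_tree_patterns k K X F m
    using assms False by unfold_locales auto
  have "stem_entropy k K X i = limsup (\<lambda>n. ereal (stem_ratio i n))"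
    by (simp add: stem_entropy_def pn_semi_def stem_ratio_def log_patterns_def stem_size_def)
  also have "\<dots> = ereal tree_entropy"
    using stem_ratio_tendsto[OF assms(5)]
    by (intro lim_imp_Limsup trivial_limit_sequentially tendsto_ereal)
  finally show ?thesis
    using tendsto_ereal[OF ball_ratio_tendsto] by (simp add: pn_def ball_ratio_def)
qed

theorem theorem4p1:
  fixes k :: nat and K :: "nat \<Rightarrow> nat \<Rightarrow> nat"
    and A :: "nat \<Rightarrow> 'a::finite \<Rightarrow> 'a \<Rightarrow> bool"
  assumes "\<forall>i<k. \<forall>j<k. K i j \<in> {0, 1}"
    and "primitive k K"
    and "\<exists>i<k. (\<Sum>j<k. K i j) = k"
  shows "\<forall>i<k. (\<lambda>n. ereal (ln (real (pn k K (markov_tree_shift k K A) n)) /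
              real (card (ball k K n))))
           \<longlonglongrightarrow> stem_entropy k K (markov_tree_shift k K A) i"
proof -
  obtain F where "F < k" "(\<Sum>j<k. K F j) = k" using assms(3) by blast
  then have "\<forall>j<k. K F j = 1" using assms(1) by (intro zero_one_row_sum_eq) auto
  then show ?thesis
    using ball_ratio_tendsto_stem_entropy[OF assms(1,2) \<open>F < k\<close>] by blast
qed

end
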